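(* A strong regular facets-pairing structure $\mathcal{F}$ on $\mathcal{C}^n$ is perfect if and only if all $2^n$ vertices of $\mathcal{C}^n$ belong to a single face family of $\mathcal{F}$.
   Context: Let $[\pm n]=\{\pm1,\dots,\pm n\}$ and $\mathcal{C}^n=\{x\in\mathbb{R}^n: -\tfrac14\le x_i\le\tfrac14\}$. For $1\le i\le n$, $\mathbf{F}(i)$ and $\mathbf{F}(-i)$ denote the facets of $\mathcal{C}^n$ in $\{x_i=\tfrac14\}$ and $\{x_i=-\tfrac14\}$; for $j_1,\dots,j_s\in[\pm n]$ with distinct absolute values, $\mathbf{F}(j_1,\dots,j_s)=\bigcap_i\mathbf{F}(j_i)$ (every proper face has this form). A signed permutation is a bijection $\sigma$ of $[\pm n]$ with $\sigma(-k)=-\sigma(k)$. A facets-pairing structure on $\mathcal{C}^n$ is a pair $(\omega,\{\tau_j\})$ where $\omega$ is a bijection of $[\pm n]$ with $\omega\circ\omega=\mathrm{id}$ and $\tau_j:\mathbf{F}(j)\to\mathbf{F}(\omega(j))$ are face-preserving homeomorphisms with $\tau_{\omega(j)}=\tau_j^{-1}$, such that for all $|j|\ne|k|$, writing $\tau_j(\mathbf{F}(j,k))=\mathbf{F}(\omega(j),k')$ and $\tau_k(\mathbf{F}(j,k))=\mathbf{F}(j',\omega(k))$, one has $\tau_{k'}\tau_j(p)=\tau_{j'}\tau_k(p)$ for all $p\in\mathbf{F}(j,k)$. It is regular if each $\tau_j$ is a Euclidean isometry and $\omega$ is a signed permutation. A composition $\tau_{k_m}\circ\dots\circ\tau_{k_1}$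 applied to a proper face $f$ is valid if $f\subset\mathbf{F}(k_1)$ and $\tau_{k_i}\circ\dots\circ\tau_{k_1}(f)\subset\mathbf{F}(k_{i+1})$ for $1\le i<m$ ($m=0$ allowed). The face family $\widehat f$ is the set of faces $\tau_{k_m}\circ\dots\circ\tau_{k_1}(f)$ over all valid compositions. $\mathcal{F}$ is perfect if for every proper face $f$ of codimension $s$, $\widehat f$ has exactly $2^s$ elements. For a proper face $f$ let $\Xi(f)$ be the set of facets containing $f$. If $f\subset\mathbf{F}(k)$ and $f'=\tau_k(f)$, define $\Psi^f_k:\Xi(f)\to\Xi(f')$ by $\Psi^f_k(\mathbf{F}(k))=\mathbf{F}(\omega(k))$ and, for $F'\in\Xi(f)\setminus\{\mathbf{F}(k)\}$, $\Psi^f_k(F')$ is the facet $G$ with $G\cap\mathbf{F}(\omega(k))=\tau_k(F'\cap\mathbf{F}(k))$. $\mathcal{F}$ is strong if for every proper face $f$ and any two valid compositions mapping $f$ onto the same face $\widetilde f$: (a) they agree at every point of $f$; and (b) the corresponding composites of the maps $\Psi$ along the two compositions coincide as maps $\Xi(f)\to\Xi(\widetilde f)$. *)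

theory Defs
  imports "HOL-Analysis.Analysis"
begin

text \<open>Signed indices [+-n] are rendered as pairs (i, b) :: 'n \<times> bool, where
  (i, True) stands for +i and (i, False) for -i; |(i,b)| = i.
  Points of R^n are elements of real^'n, n = CARD('n).\<close>

type_synonym 'n sidx = "'n \<times> bool"

definition sneg :: "'n sidx \<Rightarrow> 'n sidx" where
  "sneg j = (fst j, \<not> snd j)"

definition cube :: "(real^'n::finite) set" where
  "cube = {x. \<forall>i. -(1/4) \<le> x $ i \<and> x $ i \<le> 1/4}"

definition facet :: "'n::finite sidx \<Rightarrow> (real^'n) set" where
  "facet j = {x \<in> cube. x $ fst j = (if snd j then 1/4 else -(1/4))}"

definition proper_face :: "(real^'n::finite) set \<Rightarrow> bool" where
  "proper_face f \<longleftrightarrow> (\<exists>J::'n sidx set. J \<noteq> {} \<and>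
      (\<forall>j\<in>J. \<forall>k\<in>J. fst j = fst k \<longrightarrow> j = k) \<and> f = (\<Inter>j\<in>J. facet j))"

definition Xi :: "(real^'n::finite) set \<Rightarrow> 'n sidx set" where
  "Xi f = {j. f \<subseteq> facet j}"

definition codim :: "(real^'n::finite) set \<Rightarrow> nat" where
  "codim f = card (Xi f)"

definition vertex :: "(real^'n::finite) \<Rightarrow> bool" where
  "vertex x \<longleftrightarrow> (\<forall>i. x $ i = 1/4 \<or> x $ i = -(1/4))"

definition facets_pairing ::
  "('n::finite sidx \<Rightarrow> 'n sidx) \<Rightarrow> ('n sidx \<Rightarrow> real^'n \<Rightarrow> real^'n) \<Rightarrow> bool" where
  "facets_pairing \<omega> \<tau> \<longleftrightarrow>
     bij \<omega> \<and> \<omega> \<circ> \<omega> = id \<and>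
     (\<forall>j. homeomorphism (facet j) (facet (\<omega> j)) (\<tau> j) (\<tau> (\<omega> j))) \<and>
     (\<forall>j f. proper_face f \<and> f \<subseteq> facet j \<longrightarrow> proper_face (\<tau> j ` f)) \<and>
     (\<forall>j k j' k'. fst j \<noteq> fst k \<longrightarrow>
        \<tau> j ` (facet j \<inter> facet k) = facet (\<omega> j) \<inter> facet k' \<longrightarrow>
        \<tau> k ` (facet j \<inter> facet k) = facet j' \<inter> facet (\<omega> k) \<longrightarrow>
        (\<forall>p \<in> facet j \<inter> facet k. \<tau> k' (\<tau> j p) = \<tau> j' (\<tau> k p)))"

definition signed_perm :: "('n::finite sidx \<Rightarrow> 'n sidx) \<Rightarrow> bool" where
  "signed_perm \<omega> \<longleftrightarrow> bij \<omega> \<and> (\<forall>k. \<omega> (sneg k) = sneg (\<omega> k))"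

definition regular_fps ::
  "('n::finite sidx \<Rightarrow> 'n sidx) \<Rightarrow> ('n sidx \<Rightarrow> real^'n \<Rightarrow> real^'n) \<Rightarrow> bool" where
  "regular_fps \<omega> \<tau> \<longleftrightarrow> facets_pairing \<omega> \<tau> \<and> signed_perm \<omega> \<and>
     (\<forall>j. \<forall>x\<in>facet j. \<forall>y\<in>facet j. dist (\<tau> j x) (\<tau> j y) = dist x y)"

text \<open>A composition tau_{k_m} o ... o tau_{k_1} is given by the list [k_1,...,k_m].\<close>
fun valid_comp :: "('n::finite sidx \<Rightarrow> real^'n \<Rightarrow> real^'n) \<Rightarrow> (real^'n) set \<Rightarrow> 'n sidx list \<Rightarrow> bool" where
  "valid_comp \<tau> f [] = True"
| "valid_comp \<tau> f (k # ks) = (f \<subseteq> facet k \<and> valid_comp \<tau> (\<tau> k ` f) ks)"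

definition comp_map :: "('n sidx \<Rightarrow> real^'n \<Rightarrow> real^'n) \<Rightarrow> 'n sidx list \<Rightarrow> real^'n \<Rightarrow> real^'n" where
  "comp_map \<tau> ks p = fold (\<lambda>k q. \<tau> k q) ks p"

definition face_family ::
  "('n::finite sidx \<Rightarrow> real^'n \<Rightarrow> real^'n) \<Rightarrow> (real^'n) set \<Rightarrow> (real^'n) set set" where
  "face_family \<tau> f = {comp_map \<tau> ks ` f | ks. valid_comp \<tau> f ks}"

definition perfect ::
  "('n::finite sidx \<Rightarrow> real^'n \<Rightarrow> real^'n) \<Rightarrow> bool" where
  "perfect \<tau> \<longleftrightarrow> (\<forall>f. proper_face f \<longrightarrow> card (face_family \<tau> f) = 2 ^ codim f)"

definition Psi ::
  "('n::finite sidx \<Rightarrow> 'n sidx) \<Rightarrow> ('n sidx \<Rightarrow> real^'n \<Rightarrow> real^'n) \<Rightarrow> 'n sidx \<Rightarrow> 'n sidx \<Rightarrow> 'n sidx" where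
  "Psi \<omega> \<tau> k j = (if j = k then \<omega> k
      else (THE l. facet l \<inter> facet (\<omega> k) = \<tau> k ` (facet j \<inter> facet k)))"

definition Psi_comp ::
  "('n::finite sidx \<Rightarrow> 'n sidx) \<Rightarrow> ('n sidx \<Rightarrow> real^'n \<Rightarrow> real^'n) \<Rightarrow> 'n sidx list \<Rightarrow> 'n sidx \<Rightarrow> 'n sidx" where
  "Psi_comp \<omega> \<tau> ks j = fold (\<lambda>k l. Psi \<omega> \<tau> k l) ks j"

definition strong ::
  "('n::finite sidx \<Rightarrow> 'n sidx) \<Rightarrow> ('n sidx \<Rightarrow> real^'n \<Rightarrow> real^'n) \<Rightarrow> bool" where
  "strong \<omega> \<tau> \<longleftrightarrow> (\<forall>f ks1 ks2. proper_face f \<longrightarrow> valid_comp \<tau> f ks1 \<longrightarrow> valid_comp \<tau> f ks2 \<longrightarrow>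
      comp_map \<tau> ks1 ` f = comp_map \<tau> ks2 ` f \<longrightarrow>
      (\<forall>p\<in>f. comp_map \<tau> ks1 p = comp_map \<tau> ks2 p) \<and>
      (\<forall>j\<in>Xi f. Psi_comp \<omega> \<tau> ks1 j = Psi_comp \<omega> \<tau> ks2 j))"

end

theory Submission
  imports Defs
begin

(*
  Each tau_k maps proper faces to proper faces and is injective, hence
     a bijection on vertices; counting vertices, it preserves codimension.  All vertices lie in
     the family of a vertex v0.  Strongness gives each vertex w a well-defined bijection
     label_map w from the n facets at v0 to those at w; the moves "flip a" (apply the pairing
     map of the facet labelled a) are commuting involutions on vertices.  Their orbits under a
     label set T have exactly 2^|T| elements, and the face family of a proper face through u
     with label set T is in bijection with the orbit of u under T (card_face_family).
  4. The theorem.  (=>) For a vertex q every member of the family of {q} is a vertex singleton,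
     and perfectness makes all 2^n of them occur.  (<=) A face whose family contains vertex
     singletons is itself a vertex, so step 3 applies.
*)

section \<open>Combinatorics of the cube\<close>

definition side :: "bool \<Rightarrow> real" where
  "side b = (if b then 1/4 else -(1/4))"

lemma side_eq_iff [simp]: "side a = side b \<longleftrightarrow> a = b"
  by (auto simp: side_def)

lemma mem_facet_iff: "x \<in> facet j \<longleftrightarrow> x \<in> cube \<and> x $ fst j = side (snd j)"
  by (simp add: facet_def side_def)

definition consistent :: "'n sidx set \<Rightarrow> bool" where
  "consistent J \<longleftrightarrow> (\<forall>j\<in>J. \<forall>k\<in>J. fst j = fst k \<longrightarrow> j = k)"

definition vertices_of :: "(real^'n::finite) set \<Rightarrow> (real^'n) set" where
  "vertices_of S = {v. vertex v \<and> v \<in> S}"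

text \<open>The vertex of the face given by J whose free coordinates are +1/4 exactly on A.\<close>
definition corner :: "'n::finite sidx set \<Rightarrow> 'n set \<Rightarrow> real^'n" where
  "corner J A = (\<chi> i. if \<exists>j\<in>J. fst j = i then side (snd (SOME j. j \<in> J \<and> fst j = i))
      else if i \<in> A then 1/4 else -(1/4))"

lemma corner_fixed:
  assumes "consistent J" "j \<in> J"
  shows "corner J A $ fst j = side (snd j)"
proof -
  have "\<exists>j'. j' \<in> J \<and> fst j' = fst j" using assms by blast
  then have "(SOME j'. j' \<in> J \<and> fst j' = fst j) \<in> J \<and> fst (SOME j'. j' \<in> J \<and> fst j' = fst j) = fst j"
    by (rule someI_ex)
  then have "(SOME j'. j' \<in> J \<and> fst j' = fst j) = j"
    using assms unfolding consistent_def by blast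
  then show ?thesis using assms by (auto simp: corner_def)
qed

lemma corner_free: "i \<notin> fst ` J \<Longrightarrow> corner J A $ i = (if i \<in> A then 1/4 else -(1/4))"
  by (auto simp: corner_def)

lemma vertex_corner: "vertex (corner J A)"
  by (auto simp: vertex_def corner_def side_def)

lemma vertex_in_cube: "vertex v \<Longrightarrow> v \<in> cube"
  unfolding vertex_def cube_def
proof (intro CollectI allI)
  fix i assume "\<forall>i. v $ i = 1/4 \<or> v $ i = -(1/4)"
  then have "v $ i = 1/4 \<or> v $ i = -(1/4)" by blast
  then show "-(1/4) \<le> v $ i \<and> v $ i \<le> 1/4" by auto
qed

lemma corner_in_face: "consistent J \<Longrightarrow> corner J A \<in> (\<Inter>j\<in>J. facet j)"
  using corner_fixed vertex_in_cube[OF vertex_corner] by (auto simp: mem_facet_iff)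

lemma Xi_face:
  fixes J :: "'n::finite sidx set"
  assumes "consistent J"
  shows "Xi (\<Inter>j\<in>J. facet j) = J"
proof
  show "J \<subseteq> Xi (\<Inter>j\<in>J. facet j)" by (auto simp: Xi_def)
  show "Xi (\<Inter>j\<in>J. facet j) \<subseteq> J"
  proof
    fix l assume l: "l \<in> Xi (\<Inter>j\<in>J. facet j)"
    define A where "A = (if snd l then {} else {fst l})"
    have "corner J A \<in> facet l" using l corner_in_face[OF assms] by (auto simp: Xi_def)
    then have on_l: "corner J A $ fst l = side (snd l)" by (simp add: mem_facet_iff)
    show "l \<in> J"
    proof (cases "fst l \<in> fst ` J")
      case True
      then obtain j where j: "j \<in> J" "fst j = fst l" by auto
      then have "j = l" using on_l corner_fixed[OF assms j(1)] by (simp add: prod_eq_iff)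
      then show ?thesis using j by simp
    next
      case False
      then show ?thesis using on_l corner_free[OF False] by (auto simp: A_def side_def split: if_splits)
    qed
  qed
qed

lemma consistent_card:
  fixes J :: "'n::finite sidx set"
  assumes "consistent J"
  shows "inj_on fst J" "card J \<le> CARD('n)"
proof -
  show inj: "inj_on fst J" using assms unfolding consistent_def inj_on_def by blast
  have "card (fst ` J) \<le> CARD('n)" by (rule card_mono) auto
  then show "card J \<le> CARD('n)" using card_image[OF inj] by simp
qed

definition positive_free :: "'n sidx set \<Rightarrow> real^'n \<Rightarrow> 'n set" where
  "positive_free J v = {i. i \<notin> fst ` J \<and> v $ i = 1/4}"

lemma vertices_of_face_bij:
  fixes J :: "'n::finite sidx set"
  assumes "consistent J"
  shows "bij_betw (positive_free J) (vertices_of (\<Inter>j\<in>J. facet j)) (Pow (- fst ` J))"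
proof (rule bij_betw_imageI)
  show "inj_on (positive_free J) (vertices_of (\<Inter>j\<in>J. facet j))"
  proof (rule inj_onI)
    fix v w
    assume v: "v \<in> vertices_of (\<Inter>j\<in>J. facet j)" and w: "w \<in> vertices_of (\<Inter>j\<in>J. facet j)"
      and eq: "positive_free J v = positive_free J w"
    have "v $ i = w $ i" for i
    proof (cases "i \<in> fst ` J")
      case True
      then obtain j where "j \<in> J" "fst j = i" by auto
      then show ?thesis using v w by (auto simp: vertices_of_def mem_facet_iff)
    next
      case False
      then have "v $ i = 1/4 \<longleftrightarrow> w $ i = 1/4" using eq unfolding positive_free_def by blast
      moreover have "v $ i = 1/4 \<or> v $ i = -(1/4)" "w $ i = 1/4 \<or> w $ i = -(1/4)"
        using v w by (auto simp: vertices_of_def vertex_def)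
      ultimately show ?thesis by auto
    qed
    then show "v = w" by (simp add: vec_eq_iff)
  qed
  show "positive_free J ` vertices_of (\<Inter>j\<in>J. facet j) = Pow (- fst ` J)"
  proof
    show "positive_free J ` vertices_of (\<Inter>j\<in>J. facet j) \<subseteq> Pow (- fst ` J)"
      by (auto simp: positive_free_def)
    show "Pow (- fst ` J) \<subseteq> positive_free J ` vertices_of (\<Inter>j\<in>J. facet j)"
    proof
      fix A assume A: "A \<in> Pow (- fst ` J)"
      have "i \<in> positive_free J (corner J A) \<longleftrightarrow> i \<in> A" for i
        using A corner_free[of i J A] by (auto simp: positive_free_def split: if_splits)
      then have "positive_free J (corner J A) = A" by blast
      moreover have "corner J A \<in> vertices_of (\<Inter>j\<in>J. facet j)"
        using corner_in_face[OF assms] vertex_corner by (auto simp: vertices_of_def)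
      ultimately show "A \<in> positive_free J ` vertices_of (\<Inter>j\<in>J. facet j)" by (metis imageI)
    qed
  qed
qed

lemma card_vertices_of_face:
  fixes J :: "'n::finite sidx set"
  assumes "consistent J"
  shows "card (vertices_of (\<Inter>j\<in>J. facet j)) = 2 ^ (CARD('n) - card J)"
proof -
  have "card (vertices_of (\<Inter>j\<in>J. facet j)) = 2 ^ card (- fst ` J)"
    using bij_betw_same_card[OF vertices_of_face_bij[OF assms]] by (simp add: card_Pow)
  moreover have "card (- fst ` J) = CARD('n) - card J"
    using card_Diff_subset[of "fst ` J" UNIV] card_image[OF consistent_card(1)[OF assms]]
    by (simp add: Compl_eq_Diff_UNIV)
  ultimately show ?thesis by simp
qed

lemma card_vertices: "card {v :: real^'n::finite. vertex v} = 2 ^ CARD('n)"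
  using card_vertices_of_face[of "{} :: 'n sidx set"] by (simp add: consistent_def vertices_of_def)

lemma finite_vertices: "finite {v :: real^'n::finite. vertex v}"
  using card_vertices[where 'n='n] by (metis card_ge_0_finite zero_less_numeral zero_less_power)

lemma proper_faceI: "consistent J \<Longrightarrow> J \<noteq> {} \<Longrightarrow> proper_face (\<Inter>j\<in>J. facet j)"
  unfolding proper_face_def consistent_def by blast

lemma proper_face_Xi:
  assumes "proper_face f"
  shows "consistent (Xi f)" "Xi f \<noteq> {}" "f = (\<Inter>j\<in>Xi f. facet j)"
proof -
  obtain J where J: "J \<noteq> {}" "consistent J" "f = (\<Inter>j\<in>J. facet j)"
    using assms unfolding proper_face_def consistent_def by blast
  then have "Xi f = J" using Xi_face by blast
  then show "consistent (Xi f)" "Xi f \<noteq> {}" "f = (\<Inter>j\<in>Xi f. facet j)" using J by auto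
qed

lemma proper_face_has_vertex:
  assumes "proper_face f"
  shows "\<exists>u. vertex u \<and> u \<in> f"
proof -
  have "corner (Xi f) {} \<in> f"
    using corner_in_face[OF proper_face_Xi(1)[OF assms]] proper_face_Xi(3)[OF assms, symmetric] by simp
  then show ?thesis using vertex_corner by blast
qed

lemma vertex_as_face:
  assumes "vertex v"
  shows "{v} = (\<Inter>j\<in>range (\<lambda>i. (i, v $ i = 1/4)). facet j)"
proof
  have coord: "v $ i = side (v $ i = 1/4)" for i using assms by (auto simp: vertex_def side_def)
  show "{v} \<subseteq> (\<Inter>j\<in>range (\<lambda>i. (i, v $ i = 1/4)). facet j)"
    using coord vertex_in_cube[OF assms] by (auto simp: mem_facet_iff)
  show "(\<Inter>j\<in>range (\<lambda>i. (i, v $ i = 1/4)). facet j) \<subseteq> {v}"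
  proof
    fix x assume "x \<in> (\<Inter>j\<in>range (\<lambda>i. (i, v $ i = 1/4)). facet j)"
    then have "x $ i = v $ i" for i using coord[of i] by (auto simp: mem_facet_iff)
    then show "x \<in> {v}" by (simp add: vec_eq_iff)
  qed
qed

lemma vertex_proper_face:
  fixes v :: "real^'n::finite"
  assumes "vertex v"
  shows "proper_face {v}" "codim {v} = CARD('n)"
proof -
  have cons: "consistent (range (\<lambda>i. (i, v $ i = 1/4)))" by (auto simp: consistent_def)
  show "proper_face {v}" using vertex_as_face[OF assms] proper_faceI[OF cons] by simp
  have "Xi {v} = range (\<lambda>i. (i, v $ i = 1/4))" using vertex_as_face[OF assms] Xi_face[OF cons] by metis
  moreover have "inj (\<lambda>i::'n. (i, v $ i = 1/4))" by (auto simp: inj_def)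
  ultimately show "codim {v} = CARD('n)" by (simp add: codim_def card_image)
qed

text \<open>Conversely, a singleton proper face is a vertex: it has at most one vertex, so its
  codimension is n and every coordinate is fixed to +-1/4.\<close>
lemma proper_singleton_vertex:
  fixes p :: "real^'n::finite"
  assumes "proper_face {p}"
  shows "vertex p"
proof -
  note P = proper_face_Xi[OF assms]
  have "card (vertices_of {p}) \<le> 1"
    using card_mono[of "{p}" "vertices_of {p}"] by (auto simp: vertices_of_def)
  then have "(2::nat) ^ (CARD('n) - card (Xi {p})) \<le> 1"
    using card_vertices_of_face[OF P(1)] P(3) by simp
  then have "card (Xi {p}) = CARD('n)"
    using consistent_card(2)[OF P(1)] by (metis one_less_power one_less_numeral_iff
      semiring_norm(76) not_gr0 not_le diff_is_0_eq le_antisym)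
  then have "card (fst ` Xi {p}) = CARD('n)" using card_image[OF consistent_card(1)[OF P(1)]] by simp
  then have all: "fst ` Xi {p} = UNIV" by (simp add: card_eq_UNIV_imp_eq_UNIV)
  show ?thesis unfolding vertex_def
  proof
    fix i
    obtain j where "j \<in> Xi {p}" "fst j = i" using all by (metis UNIV_I imageE)
    then have "p $ i = side (snd j)" by (auto simp: Xi_def mem_facet_iff)
    then show "p $ i = 1/4 \<or> p $ i = -(1/4)" by (auto simp: side_def)
  qed
qed

lemma comp_map_Nil [simp]: "comp_map \<tau> [] p = p"
  by (simp add: comp_map_def)

lemma comp_map_Cons [simp]: "comp_map \<tau> (k # ks) p = comp_map \<tau> ks (\<tau> k p)"
  by (simp add: comp_map_def)

lemma comp_map_append: "comp_map \<tau> (ks @ ls) p = comp_map \<tau> ls (comp_map \<tau> ks p)"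
  by (simp add: comp_map_def)

lemma Psi_comp_Cons [simp]: "Psi_comp \<omega> \<tau> (k # ks) j = Psi_comp \<omega> \<tau> ks (Psi \<omega> \<tau> k j)"
  by (simp add: Psi_comp_def)

lemma Psi_comp_append: "Psi_comp \<omega> \<tau> (ks @ ls) j = Psi_comp \<omega> \<tau> ls (Psi_comp \<omega> \<tau> ks j)"
  by (simp add: Psi_comp_def)

lemma valid_comp_append:
  "valid_comp \<tau> f (ks @ ls) \<longleftrightarrow> valid_comp \<tau> f ks \<and> valid_comp \<tau> (comp_map \<tau> ks ` f) ls"
  by (induction ks arbitrary: f) (auto simp: image_image)


section \<open>Facets-pairing structures\<close>

locale pairing_structure =
  fixes \<omega> :: "'n::finite sidx \<Rightarrow> 'n sidx" and \<tau> :: "'n sidx \<Rightarrow> real^'n \<Rightarrow> real^'n"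
  assumes pairing: "facets_pairing \<omega> \<tau>"
begin

lemma tau_homeomorphism: "homeomorphism (facet j) (facet (\<omega> j)) (\<tau> j) (\<tau> (\<omega> j))"
  using pairing unfolding facets_pairing_def by blast

lemma tau_proper_face: "proper_face f \<Longrightarrow> f \<subseteq> facet j \<Longrightarrow> proper_face (\<tau> j ` f)"
  using pairing unfolding facets_pairing_def by blast

lemma tau_commute:
  assumes "fst j \<noteq> fst k"
    and "\<tau> j ` (facet j \<inter> facet k) = facet (\<omega> j) \<inter> facet k'"
    and "\<tau> k ` (facet j \<inter> facet k) = facet j' \<inter> facet (\<omega> k)"
    and "p \<in> facet j \<inter> facet k"
  shows "\<tau> k' (\<tau> j p) = \<tau> j' (\<tau> k p)"
  using pairing assms unfolding facets_pairing_def by blast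

lemma tau_image: "\<tau> j ` facet j = facet (\<omega> j)"
  using tau_homeomorphism[of j] by (simp add: homeomorphism_def)

lemma tau_in_facet: "x \<in> facet j \<Longrightarrow> \<tau> j x \<in> facet (\<omega> j)"
  using tau_image by blast

lemma tau_inverse: "x \<in> facet j \<Longrightarrow> \<tau> (\<omega> j) (\<tau> j x) = x"
  using tau_homeomorphism[of j] by (simp add: homeomorphism_def)

lemma tau_inj_on: "inj_on (\<tau> j) (facet j)"
  by (metis inj_on_inverseI tau_inverse)

text \<open>Vertices are the singleton proper faces, so the pairing maps preserve them.\<close>
lemma tau_vertex: "vertex x \<Longrightarrow> x \<in> facet k \<Longrightarrow> vertex (\<tau> k x)"
  using tau_proper_face[of "{x}" k] vertex_proper_face(1)[of x] proper_singleton_vertex by auto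

text \<open>The vertices of tau_k(g) are the images of the vertices of g (tau_(omega k) undoes tau_k).\<close>
lemma vertices_of_tau_image:
  assumes "g \<subseteq> facet k"
  shows "vertices_of (\<tau> k ` g) = \<tau> k ` vertices_of g"
proof
  show "\<tau> k ` vertices_of g \<subseteq> vertices_of (\<tau> k ` g)"
    unfolding vertices_of_def using tau_vertex assms by blast
  show "vertices_of (\<tau> k ` g) \<subseteq> \<tau> k ` vertices_of g"
  proof
    fix y assume "y \<in> vertices_of (\<tau> k ` g)"
    then obtain x where x: "x \<in> g" "y = \<tau> k x" "vertex y" by (auto simp: vertices_of_def)
    have x_facet: "x \<in> facet k" using x assms by auto
    have "vertex (\<tau> (\<omega> k) y)" using tau_vertex[of y "\<omega> k"] x tau_in_facet[OF x_facet] by simp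
    then have "vertex x" using tau_inverse[OF x_facet] x by simp
    then show "y \<in> \<tau> k ` vertices_of g" using x by (auto simp: vertices_of_def)
  qed
qed

text \<open>The pairing maps preserve codimension: a face and its image have equally many vertices.\<close>
lemma card_Xi_tau_image:
  assumes "proper_face g" "g \<subseteq> facet k"
  shows "card (Xi (\<tau> k ` g)) = card (Xi g)"
proof -
  have g': "proper_face (\<tau> k ` g)" using tau_proper_face assms by blast
  have "inj_on (\<tau> k) (vertices_of g)"
    by (rule inj_on_subset[OF tau_inj_on]) (use assms(2) in \<open>auto simp: vertices_of_def\<close>)
  then have "card (vertices_of (\<tau> k ` g)) = card (vertices_of g)"
    using vertices_of_tau_image[OF assms(2)] card_image by metis
  then have "(2::nat) ^ (CARD('n) - card (Xi (\<tau> k ` g))) = 2 ^ (CARD('n) - card (Xi g))"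
    using card_vertices_of_face proper_face_Xi(1,3) g' assms(1) by metis
  moreover have "card (Xi (\<tau> k ` g)) \<le> CARD('n)" "card (Xi g) \<le> CARD('n)"
    using consistent_card(2) proper_face_Xi(1) g' assms(1) by blast+
  ultimately show ?thesis by (simp add: power_inject_exp)
qed

lemma facet_pair:
  assumes "fst j \<noteq> fst k"
  shows "Xi (facet j \<inter> facet k) = {j, k}" "proper_face (facet j \<inter> facet k)"
proof -
  have cons: "consistent {j, k}" using assms by (auto simp: consistent_def)
  show "Xi (facet j \<inter> facet k) = {j, k}" using Xi_face[OF cons] by simp
  show "proper_face (facet j \<inter> facet k)" using proper_faceI[OF cons] by simp
qed

lemma Psi_facet:
  assumes "fst j \<noteq> fst k"
  shows "facet (Psi \<omega> \<tau> k j) \<inter> facet (\<omega> k) = \<tau> k ` (facet j \<inter> facet k)" "Psi \<omega> \<tau> k j \<noteq> \<omega> k"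
proof -
  define h where "h = \<tau> k ` (facet j \<inter> facet k)"
  have h: "proper_face h" unfolding h_def using tau_proper_face[OF facet_pair(2)[OF assms]] by blast
  have "j \<noteq> k" using assms by auto
  then have "card (Xi h) = 2"
    unfolding h_def using card_Xi_tau_image[OF facet_pair(2)[OF assms]] facet_pair(1)[OF assms] by simp
  then obtain x y where xy: "Xi h = {x, y}" "x \<noteq> y" by (auto simp: card_2_iff)
  have "\<omega> k \<in> Xi h" unfolding h_def Xi_def using tau_image by blast
  then obtain l where l: "Xi h = {\<omega> k, l}" "l \<noteq> \<omega> k"
    using xy by (metis insert_commute insertE singletonD)
  have h_eq: "h = facet l \<inter> facet (\<omega> k)"
    using proper_face_Xi(3)[OF h] unfolding l(1) by blast
  have unique: "l' = l" if "facet l' \<inter> facet (\<omega> k) = h" for l'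
  proof -
    have "l' \<in> Xi h" using that by (auto simp: Xi_def)
    moreover have "l' \<noteq> \<omega> k"
    proof
      assume "l' = \<omega> k"
      then have "Xi h = {\<omega> k}"
        using that Xi_face[of "{\<omega> k}"] by (simp add: consistent_def)
      then show False using l by auto
    qed
    ultimately show ?thesis using l by auto
  qed
  have "Psi \<omega> \<tau> k j = (THE l. facet l \<inter> facet (\<omega> k) = h)"
    using \<open>j \<noteq> k\<close> by (simp add: Psi_def h_def)
  also have "\<dots> = l" using unique h_eq by (intro the_equality) auto
  finally have "Psi \<omega> \<tau> k j = l" .
  then show "facet (Psi \<omega> \<tau> k j) \<inter> facet (\<omega> k) = \<tau> k ` (facet j \<inter> facet k)" "Psi \<omega> \<tau> k j \<noteq> \<omega> k"
    using h_eq h_def l(2) by simp_all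
qed

lemma Xi_tau_image:
  assumes "proper_face g" "g \<subseteq> facet k"
  shows "Xi (\<tau> k ` g) = Psi \<omega> \<tau> k ` Xi g" "inj_on (Psi \<omega> \<tau> k) (Xi g)"
proof -
  have k: "k \<in> Xi g" using assms by (simp add: Xi_def)
  have other: "fst j \<noteq> fst k" if "j \<in> Xi g" "j \<noteq> k" for j
    using proper_face_Xi(1)[OF assms(1)] that k by (auto simp: consistent_def)
  have into: "Psi \<omega> \<tau> k ` Xi g \<subseteq> Xi (\<tau> k ` g)"
  proof
    fix l assume "l \<in> Psi \<omega> \<tau> k ` Xi g"
    then obtain j where j: "j \<in> Xi g" "l = Psi \<omega> \<tau> k j" by auto
    show "l \<in> Xi (\<tau> k ` g)"
    proof (cases "j = k")
      case True
      then show ?thesis using j tau_image[of k] assms(2) by (auto simp: Xi_def Psi_def)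
    next
      case False
      have "g \<subseteq> facet j \<inter> facet k" using j assms(2) by (auto simp: Xi_def)
      then have "\<tau> k ` g \<subseteq> facet l" using Psi_facet(1)[OF other[OF j(1) False]] j(2) by blast
      then show ?thesis by (auto simp: Xi_def)
    qed
  qed
  show inj: "inj_on (Psi \<omega> \<tau> k) (Xi g)"
  proof (rule inj_onI)
    fix j1 j2 assume j: "j1 \<in> Xi g" "j2 \<in> Xi g" "Psi \<omega> \<tau> k j1 = Psi \<omega> \<tau> k j2"
    show "j1 = j2"
    proof (cases "j1 = k \<or> j2 = k")
      case True
      then show ?thesis using Psi_facet(2) other j by (metis Psi_def)
    next
      case False
      have "\<tau> k ` (facet j1 \<inter> facet k) = \<tau> k ` (facet j2 \<inter> facet k)"
        using Psi_facet(1) other j False by metis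
      then have "facet j1 \<inter> facet k = facet j2 \<inter> facet k"
        using inj_on_image_eq_iff[OF tau_inj_on[of k]] by blast
      then have "{j1, k} = {j2, k}" using facet_pair(1) other j False by metis
      then show ?thesis using False by (metis insertE insertI1 singletonD)
    qed
  qed
  have "card (Psi \<omega> \<tau> k ` Xi g) = card (Xi (\<tau> k ` g))"
    using card_image[OF inj] card_Xi_tau_image[OF assms] by simp
  then show "Xi (\<tau> k ` g) = Psi \<omega> \<tau> k ` Xi g"
    using into by (intro card_subset_eq[symmetric]) auto
qed

lemma Xi_comp_image:
  "proper_face g \<Longrightarrow> valid_comp \<tau> g ks \<Longrightarrow> proper_face (comp_map \<tau> ks ` g) \<and>
     Xi (comp_map \<tau> ks ` g) = Psi_comp \<omega> \<tau> ks ` Xi g \<and> inj_on (Psi_comp \<omega> \<tau> ks) (Xi g)"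
proof (induction ks arbitrary: g)
  case Nil
  then show ?case by (simp add: Psi_comp_def comp_map_def)
next
  case (Cons k ks)
  have g: "g \<subseteq> facet k" "valid_comp \<tau> (\<tau> k ` g) ks" using Cons.prems by auto
  note IH = Cons.IH[OF tau_proper_face[OF Cons.prems(1) g(1)] g(2)]
  note step = Xi_tau_image[OF Cons.prems(1) g(1)]
  have comp: "Psi_comp \<omega> \<tau> (k # ks) = Psi_comp \<omega> \<tau> ks \<circ> Psi \<omega> \<tau> k" by auto
  have "inj_on (Psi_comp \<omega> \<tau> ks) (Psi \<omega> \<tau> k ` Xi g)" using IH step(1) by simp
  then have "inj_on (Psi_comp \<omega> \<tau> (k # ks)) (Xi g)"
    unfolding comp by (rule comp_inj_on[OF step(2)])
  moreover have "comp_map \<tau> (k # ks) ` g = comp_map \<tau> ks ` \<tau> k ` g" by (simp add: image_image)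
  moreover have "Psi_comp \<omega> \<tau> (k # ks) ` Xi g = Psi_comp \<omega> \<tau> ks ` Psi \<omega> \<tau> k ` Xi g"
    by (simp add: image_image)
  ultimately show ?case using IH step(1) by (simp only:)
qed

lemma comp_map_inj_on: "valid_comp \<tau> g ks \<Longrightarrow> inj_on (comp_map \<tau> ks) g"
proof (induction ks arbitrary: g)
  case Nil
  then show ?case by (simp add: inj_on_def)
next
  case (Cons k ks)
  have comp: "comp_map \<tau> (k # ks) = comp_map \<tau> ks \<circ> \<tau> k" by auto
  have "inj_on (\<tau> k) g" using tau_inj_on[of k] Cons.prems by (auto intro: inj_on_subset)
  moreover have "inj_on (comp_map \<tau> ks) (\<tau> k ` g)" using Cons by simp
  ultimately show ?case unfolding comp by (rule comp_inj_on)
qed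

lemma vertex_comp_map: "vertex w \<Longrightarrow> valid_comp \<tau> {w} ks \<Longrightarrow> vertex (comp_map \<tau> ks w)"
  using Xi_comp_image[OF vertex_proper_face(1)] proper_singleton_vertex by fastforce

end

section \<open>Strong structures whose vertices form one face family\<close>

text \<open>The facets at v0 serve as labels: via any route from v0 to w they are carried bijectively to
  the facets at w, and strongness makes this independent of the route.\<close>

locale vertex_transitive = pairing_structure +
  fixes v0 :: "real^'n"
  assumes strong: "strong \<omega> \<tau>"
    and vertex_v0: "vertex v0"
    and reaches_all: "\<And>w. vertex w \<Longrightarrow> {w} \<in> face_family \<tau> {v0}"
begin

definition labels :: "'n sidx set" where
  "labels = Xi {v0}"

definition routes :: "real^'n \<Rightarrow> 'n sidx list set" where
  "routes w = {ks. valid_comp \<tau> {v0} ks \<and> comp_map \<tau> ks v0 = w}"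

definition label_map :: "real^'n \<Rightarrow> 'n sidx \<Rightarrow> 'n sidx" where
  "label_map w = Psi_comp \<omega> \<tau> (SOME ks. ks \<in> routes w)"

definition flip :: "'n sidx \<Rightarrow> real^'n \<Rightarrow> real^'n" where
  "flip a x = \<tau> (label_map x a) x"

lemma finite_labels: "finite labels" "card labels = CARD('n)"
  using vertex_proper_face(2)[OF vertex_v0] by (auto simp: labels_def codim_def card_ge_0_finite)

lemma routes_nonempty:
  assumes "vertex w"
  shows "\<exists>ks. ks \<in> routes w"
proof -
  obtain ks where "{w} = comp_map \<tau> ks ` {v0}" "valid_comp \<tau> {v0} ks"
    using reaches_all[OF assms] unfolding face_family_def by blast
  then show ?thesis unfolding routes_def by auto
qed

lemma route_vertex: "ks \<in> routes w \<Longrightarrow> vertex w"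
  using vertex_comp_map[OF vertex_v0] by (auto simp: routes_def)

text \<open>Route independence, by part (b) of strongness.\<close>
lemma label_map_route:
  assumes "ks \<in> routes w" "a \<in> labels"
  shows "Psi_comp \<omega> \<tau> ks a = label_map w a"
proof -
  have "(SOME ks. ks \<in> routes w) \<in> routes w"
    using routes_nonempty[OF route_vertex[OF assms(1)]] by (rule someI_ex)
  then show ?thesis
    using strong vertex_proper_face(1)[OF vertex_v0] assms
    unfolding label_map_def strong_def routes_def labels_def by auto
qed

lemma label_map_comp:
  assumes "vertex w" "valid_comp \<tau> {w} ks" "a \<in> labels"
  shows "label_map (comp_map \<tau> ks w) a = Psi_comp \<omega> \<tau> ks (label_map w a)"
proof -
  obtain ls where ls: "ls \<in> routes w" using routes_nonempty[OF assms(1)] by blast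
  then have "ls @ ks \<in> routes (comp_map \<tau> ks w)"
    using assms(2) by (auto simp: routes_def valid_comp_append comp_map_append)
  from label_map_route[OF this assms(3)] label_map_route[OF ls assms(3)] show ?thesis
    by (simp add: Psi_comp_append)
qed

lemma label_map_bij:
  assumes "vertex w"
  shows "label_map w ` labels = Xi {w}" "inj_on (label_map w) labels"
proof -
  obtain ks where ks: "ks \<in> routes w" using routes_nonempty[OF assms] by blast
  then have "comp_map \<tau> ks ` {v0} = {w}" "valid_comp \<tau> {v0} ks" by (auto simp: routes_def)
  note transport = Xi_comp_image[OF vertex_proper_face(1)[OF vertex_v0] this(2)]
  have eq: "\<And>a. a \<in> labels \<Longrightarrow> Psi_comp \<omega> \<tau> ks a = label_map w a"
    using label_map_route[OF ks] by blast
  show "label_map w ` labels = Xi {w}"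
    using transport \<open>comp_map \<tau> ks ` {v0} = {w}\<close> eq unfolding labels_def by (auto simp: image_iff)
  show "inj_on (label_map w) labels"
    using transport eq inj_on_cong unfolding labels_def by metis
qed

text \<open>A flip moves x across a facet through x to a vertex, transports the labelling by Psi, and
  is an involution since the label a becomes the paired facet omega(label_map x a).\<close>
lemma flip_facts:
  assumes "vertex x" "a \<in> labels"
  shows "x \<in> facet (label_map x a)" "vertex (flip a x)"
    "\<And>b. b \<in> labels \<Longrightarrow> label_map (flip a x) b = Psi \<omega> \<tau> (label_map x a) (label_map x b)"
    "flip a (flip a x) = x"
proof -
  show x: "x \<in> facet (label_map x a)"
    using label_map_bij(1)[OF assms(1)] assms(2) by (auto simp: Xi_def)
  show "vertex (flip a x)" unfolding flip_def using tau_vertex[OF assms(1) x] .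
  have "valid_comp \<tau> {x} [label_map x a]" using x by simp
  from label_map_comp[OF assms(1) this]
  show new_labels: "\<And>b. b \<in> labels \<Longrightarrow> label_map (flip a x) b = Psi \<omega> \<tau> (label_map x a) (label_map x b)"
    by (simp add: flip_def Psi_comp_def)
  have "label_map (flip a x) a = \<omega> (label_map x a)" using new_labels[OF assms(2)] by (simp add: Psi_def)
  then show "flip a (flip a x) = x" using tau_inverse[OF x] by (simp add: flip_def)
qed

text \<open>Flips across different labels commute: this is the cycle condition of the pairing.\<close>
lemma flip_commute:
  assumes "vertex x" "a \<in> labels" "b \<in> labels" "a \<noteq> b"
  shows "flip b (flip a x) = flip a (flip b x)"
proof -
  define j k where "j = label_map x a" and "k = label_map x b"
  have jk: "j \<in> Xi {x}" "k \<in> Xi {x}"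
    using label_map_bij(1)[OF assms(1)] assms(2,3) unfolding j_def k_def by blast+
  have "j \<noteq> k" using label_map_bij(2)[OF assms(1)] assms unfolding j_def k_def by (meson inj_onD)
  then have fst_jk: "fst j \<noteq> fst k"
    using jk proper_face_Xi(1)[OF vertex_proper_face(1)[OF assms(1)]] unfolding consistent_def by blast
  have "\<tau> j ` (facet j \<inter> facet k) = facet (\<omega> j) \<inter> facet (Psi \<omega> \<tau> j k)"
    using Psi_facet(1)[of k j] fst_jk by (simp add: Int_commute)
  moreover have "\<tau> k ` (facet j \<inter> facet k) = facet (Psi \<omega> \<tau> k j) \<inter> facet (\<omega> k)"
    using Psi_facet(1)[OF fst_jk] by simp
  moreover have "x \<in> facet j \<inter> facet k" using jk by (simp add: Xi_def)
  ultimately have "\<tau> (Psi \<omega> \<tau> j k) (\<tau> j x) = \<tau> (Psi \<omega> \<tau> k j) (\<tau> k x)"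
    by (rule tau_commute[OF fst_jk])
  then show ?thesis
    using flip_facts(3)[OF assms(1,2) assms(3)] flip_facts(3)[OF assms(1,3) assms(2)]
    unfolding flip_def j_def k_def by simp
qed

inductive_set orbit :: "'n sidx set \<Rightarrow> real^'n \<Rightarrow> (real^'n) set" for T u where
  base: "u \<in> orbit T u"
| step: "x \<in> orbit T u \<Longrightarrow> a \<in> T \<Longrightarrow> flip a x \<in> orbit T u"

lemma orbit_vertex:
  assumes "vertex u" "T \<subseteq> labels"
  shows "x \<in> orbit T u \<Longrightarrow> vertex x"
  by (induction rule: orbit.induct) (use assms flip_facts(2) in auto)

lemma orbit_trans: "y \<in> orbit T x \<Longrightarrow> x \<in> orbit T u \<Longrightarrow> y \<in> orbit T u"
  by (induction rule: orbit.induct) (auto intro: orbit.step)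

text \<open>Flips are involutions, so orbits are symmetric.\<close>
lemma orbit_sym:
  assumes "vertex u" "T \<subseteq> labels"
  shows "x \<in> orbit T u \<Longrightarrow> u \<in> orbit T x"
proof (induction rule: orbit.induct)
  case base
  then show ?case by (rule orbit.base)
next
  case (step x a)
  have "flip a (flip a x) \<in> orbit T (flip a x)" using orbit.step[OF orbit.base step.hyps(2)] .
  moreover have "flip a (flip a x) = x"
    using flip_facts(4) orbit_vertex[OF assms step.hyps(1)] step.hyps(2) assms(2) by blast
  ultimately have "x \<in> orbit T (flip a x)" by simp
  then show ?case using orbit_trans step.IH by blast
qed

text \<open>Since flips commute, adding one label at most doubles an orbit.\<close>
lemma orbit_insert:
  assumes "vertex u" "T \<subseteq> labels" "a \<in> labels"
  shows "x \<in> orbit (insert a T) u \<Longrightarrow> x \<in> orbit T u \<union> flip a ` orbit T u"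
proof (induction rule: orbit.induct)
  case base
  then show ?case by (auto intro: orbit.base)
next
  case (step x b)
  show ?case
  proof (cases "x \<in> orbit T u")
    case True
    then show ?thesis using step.hyps(2) by (auto intro: orbit.step)
  next
    case False
    then obtain y where y: "y \<in> orbit T u" "x = flip a y" using step.IH by auto
    have y_vertex: "vertex y" using orbit_vertex[OF assms(1,2) y(1)] .
    show ?thesis
    proof (cases "b = a")
      case True
      then show ?thesis using y flip_facts(4)[OF y_vertex assms(3)] by simp
    next
      case False
      then have b: "b \<in> T" using step.hyps(2) by simp
      then have "flip b x = flip a (flip b y)"
        using y(2) flip_commute[OF y_vertex assms(3)] False assms(2) by blast
      moreover have "flip b y \<in> orbit T u" using orbit.step[OF y(1) b] .
      ultimately show ?thesis by blast
    qed
  qed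
qed

lemma finite_orbit: "vertex u \<Longrightarrow> T \<subseteq> labels \<Longrightarrow> finite (orbit T u)"
  using orbit_vertex finite_vertices by (metis (no_types, lifting) finite_subset mem_Collect_eq subsetI)

lemma card_orbit_union_le:
  assumes "vertex u" "T \<subseteq> labels"
  shows "finite S \<Longrightarrow> S \<subseteq> labels \<Longrightarrow> card (orbit (T \<union> S) u) \<le> card (orbit T u) * 2 ^ card S"
proof (induction S rule: finite_induct)
  case empty
  then show ?case by simp
next
  case (insert a S)
  have TS: "T \<union> S \<subseteq> labels" "a \<in> labels" using insert assms by auto
  have fin: "finite (orbit (T \<union> S) u)" using finite_orbit[OF assms(1) TS(1)] .
  have "card (orbit (T \<union> insert a S) u) \<le> card (orbit (T \<union> S) u \<union> flip a ` orbit (T \<union> S) u)"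
    using orbit_insert[OF assms(1) TS] fin by (intro card_mono) auto
  also have "\<dots> \<le> card (orbit (T \<union> S) u) + card (flip a ` orbit (T \<union> S) u)" by (rule card_Un_le)
  also have "\<dots> \<le> 2 * card (orbit (T \<union> S) u)" using card_image_le[OF fin, of "flip a"] by simp
  also have "\<dots> \<le> card (orbit T u) * 2 ^ card (insert a S)" using insert by simp
  finally show ?case .
qed

text \<open>Each pairing map applied to a vertex is a flip, so the orbit of v0 under all labels is
  closed under valid compositions.\<close>
lemma comp_map_in_orbit:
  "vertex x \<Longrightarrow> x \<in> orbit labels v0 \<Longrightarrow> valid_comp \<tau> {x} ks \<Longrightarrow> comp_map \<tau> ks x \<in> orbit labels v0"
proof (induction ks arbitrary: x)
  case Nil
  then show ?case by simp
next
  case (Cons k ks)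
  have "k \<in> Xi {x}" using Cons.prems(3) by (simp add: Xi_def)
  then obtain a where a: "a \<in> labels" "k = label_map x a"
    using label_map_bij(1)[OF Cons.prems(1)] by (metis imageE)
  then have "\<tau> k x = flip a x" by (simp add: flip_def)
  moreover have "flip a x \<in> orbit labels v0" using orbit.step[OF Cons.prems(2) a(1)] .
  moreover have "vertex (flip a x)" using flip_facts(2)[OF Cons.prems(1) a(1)] .
  ultimately show ?case using Cons.IH Cons.prems(3) by simp
qed

lemma orbit_labels:
  assumes "vertex u"
  shows "orbit labels u = {v. vertex v}"
proof
  show "orbit labels u \<subseteq> {v. vertex v}" using orbit_vertex[OF assms] by blast
  have in_orbit: "w \<in> orbit labels v0" if "vertex w" for w
    using routes_nonempty[OF that] comp_map_in_orbit[OF vertex_v0 orbit.base]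
    by (auto simp: routes_def)
  show "{v. vertex v} \<subseteq> orbit labels u"
    using in_orbit orbit_sym[OF vertex_v0 order_refl, of u] assms orbit_trans by blast
qed

text \<open>The orbit under T has exactly 2^|T| elements: at most 2^|T| by doubling, and at least,
  because the 2^n vertices are covered by the orbit under T extended by the remaining labels.\<close>
lemma card_orbit:
  assumes "vertex u" "T \<subseteq> labels"
  shows "card (orbit T u) = 2 ^ card T"
proof -
  have fin: "finite T" "finite (labels - T)" using finite_labels(1) assms(2) finite_subset by auto
  have "card (orbit ({} \<union> T) u) \<le> card (orbit {} u) * 2 ^ card T"
    using card_orbit_union_le[OF assms(1)] assms(2) fin by blast
  moreover have "orbit {} u = {u}" by (auto elim: orbit.cases intro: orbit.base)
  ultimately have upper: "card (orbit T u) \<le> 2 ^ card T" by simp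
  have "card (orbit (T \<union> (labels - T)) u) \<le> card (orbit T u) * 2 ^ card (labels - T)"
    using card_orbit_union_le[OF assms fin(2)] by simp
  moreover have "T \<union> (labels - T) = labels" using assms(2) by auto
  moreover have "card (labels - T) = CARD('n) - card T"
    using finite_labels assms(2) card_Diff_subset fin(1) by metis
  moreover have "card T \<le> CARD('n)" using card_mono[OF finite_labels(1) assms(2)] finite_labels(2) by simp
  ultimately have "2 ^ card T * 2 ^ (CARD('n) - card T) \<le> card (orbit T u) * 2 ^ (CARD('n) - card T)"
    using orbit_labels[OF assms(1)] card_vertices[where 'n='n] by (simp add: power_add[symmetric])
  then show ?thesis using upper by simp
qed

definition label_face :: "'n sidx set \<Rightarrow> real^'n \<Rightarrow> (real^'n) set" where
  "label_face T x = (\<Inter>j\<in>label_map x ` T. facet j)"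

lemma comp_map_label_face:
  assumes "T \<subseteq> labels"
  shows "valid_comp \<tau> g ks \<Longrightarrow> proper_face g \<Longrightarrow> vertex x \<Longrightarrow> x \<in> g \<Longrightarrow> Xi g = label_map x ` T \<Longrightarrow>
    comp_map \<tau> ks x \<in> orbit T x \<and> comp_map \<tau> ks ` g = label_face T (comp_map \<tau> ks x)"
proof (induction ks arbitrary: g x)
  case Nil
  have "g = (\<Inter>j\<in>Xi g. facet j)" using proper_face_Xi(3)[OF Nil.prems(2)] .
  also have "\<dots> = label_face T x" using Nil.prems(5) by (simp add: label_face_def)
  finally show ?case by (simp add: orbit.base)
next
  case (Cons k ks)
  have g: "g \<subseteq> facet k" "valid_comp \<tau> (\<tau> k ` g) ks" using Cons.prems(1) by auto
  then have "k \<in> Xi g" by (simp add: Xi_def)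
  then obtain a where a: "a \<in> T" "k = label_map x a" using Cons.prems(5) by blast
  have a_label: "a \<in> labels" using a(1) assms by blast
  have x': "\<tau> k x = flip a x" using a(2) by (simp add: flip_def)
  have "Xi (\<tau> k ` g) = Psi \<omega> \<tau> k ` label_map x ` T"
    using Xi_tau_image(1)[OF Cons.prems(2) g(1)] Cons.prems(5) by simp
  also have "\<dots> = label_map (flip a x) ` T"
  proof -
    have "Psi \<omega> \<tau> k (label_map x b) = label_map (flip a x) b" if "b \<in> T" for b
      using flip_facts(3)[OF Cons.prems(3) a_label, of b] that assms a(2) by auto
    then show ?thesis unfolding image_image by (intro image_cong refl)
  qed
  finally have "Xi (\<tau> k ` g) = label_map (flip a x) ` T" .
  moreover have "proper_face (\<tau> k ` g)" using tau_proper_face[OF Cons.prems(2) g(1)] .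
  moreover have "vertex (flip a x)" using flip_facts(2)[OF Cons.prems(3) a_label] .
  moreover have "flip a x \<in> \<tau> k ` g" using x' Cons.prems(4) by (metis imageI)
  ultimately have IH: "comp_map \<tau> ks (flip a x) \<in> orbit T (flip a x)"
      "comp_map \<tau> ks ` \<tau> k ` g = label_face T (comp_map \<tau> ks (flip a x))"
    using Cons.IH[OF g(2)] by simp_all
  have "flip a x \<in> orbit T x" using orbit.step[OF orbit.base a(1)] .
  with IH(1) have "comp_map \<tau> ks (flip a x) \<in> orbit T x" by (rule orbit_trans)
  then show ?case using IH(2) x' by (simp add: image_image)
qed

lemma orbit_comp_map:
  assumes "T \<subseteq> labels" "proper_face f" "vertex u" "u \<in> f" "Xi f = label_map u ` T"
  shows "x \<in> orbit T u \<Longrightarrow> \<exists>ks. valid_comp \<tau> f ks \<and> comp_map \<tau> ks u = x"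
proof (induction rule: orbit.induct)
  case base
  show ?case by (metis comp_map_Nil valid_comp.simps(1))
next
  case (step x a)
  then obtain ks where ks: "valid_comp \<tau> f ks" "comp_map \<tau> ks u = x" by blast
  have "comp_map \<tau> ks ` f = label_face T x"
    using comp_map_label_face[OF assms(1) ks(1) assms(2-5)] ks(2) by simp
  then have "comp_map \<tau> ks ` f \<subseteq> facet (label_map x a)"
    using step.hyps(2) by (auto simp: label_face_def)
  then have "valid_comp \<tau> f (ks @ [label_map x a])" using ks(1) by (simp add: valid_comp_append)
  moreover have "comp_map \<tau> (ks @ [label_map x a]) u = flip a x"
    using ks(2) by (simp add: comp_map_append flip_def)
  ultimately show ?case by blast
qed

text \<open>The face family of f is indexed by the orbit of any of its vertices; distinct orbit vertices
  give distinct faces by part (a) of strongness.\<close>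
lemma face_family_orbit:
  assumes "T \<subseteq> labels" "proper_face f" "vertex u" "u \<in> f" "Xi f = label_map u ` T"
  shows "bij_betw (label_face T) (orbit T u) (face_family \<tau> f)"
proof -
  note image = comp_map_label_face[OF assms(1) _ assms(2-5)]
  note realize = orbit_comp_map[OF assms]
  have family: "face_family \<tau> f = label_face T ` orbit T u"
  proof
    show "face_family \<tau> f \<subseteq> label_face T ` orbit T u"
      using image orbit_trans[OF _ orbit.base] by (fastforce simp: face_family_def)
    show "label_face T ` orbit T u \<subseteq> face_family \<tau> f"
      using realize image unfolding face_family_def by fastforce
  qed
  have "inj_on (label_face T) (orbit T u)"
  proof (rule inj_onI)
    fix x y assume xy: "x \<in> orbit T u" "y \<in> orbit T u" "label_face T x = label_face T y"
    obtain ks where ks: "valid_comp \<tau> f ks" "comp_map \<tau> ks u = x" using realize[OF xy(1)] by blast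
    obtain ls where ls: "valid_comp \<tau> f ls" "comp_map \<tau> ls u = y" using realize[OF xy(2)] by blast
    have "comp_map \<tau> ks ` f = comp_map \<tau> ls ` f" using image ks ls xy(3) by simp
    then have "comp_map \<tau> ks u = comp_map \<tau> ls u"
      using strong assms(2,4) ks(1) ls(1) unfolding strong_def by blast
    then show "x = y" using ks(2) ls(2) by simp
  qed
  then show ?thesis using family by (simp add: bij_betw_def)
qed

lemma card_face_family:
  assumes "proper_face f"
  shows "card (face_family \<tau> f) = 2 ^ codim f"
proof -
  obtain u where u: "vertex u" "u \<in> f" using proper_face_has_vertex[OF assms] by blast
  define T where "T = {a \<in> labels. label_map u a \<in> Xi f}"
  have T: "T \<subseteq> labels" by (auto simp: T_def)
  have Xi_f: "Xi f = label_map u ` T"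
  proof
    show "label_map u ` T \<subseteq> Xi f" by (auto simp: T_def)
    show "Xi f \<subseteq> label_map u ` T"
    proof
      fix j assume j: "j \<in> Xi f"
      then have "j \<in> Xi {u}" using u(2) by (auto simp: Xi_def)
      then obtain a where "a \<in> labels" "j = label_map u a" using label_map_bij(1)[OF u(1)] by blast
      then show "j \<in> label_map u ` T" using j by (auto simp: T_def)
    qed
  qed
  have "card (face_family \<tau> f) = card (orbit T u)"
    using bij_betw_same_card[OF face_family_orbit[OF T assms u Xi_f]] by simp
  also have "\<dots> = 2 ^ card T" using card_orbit[OF u(1) T] .
  also have "card T = card (Xi f)"
    using Xi_f card_image inj_on_subset[OF label_map_bij(2)[OF u(1)] T] by metis
  finally show ?thesis by (simp add: codim_def)
qed

end


context pairing_structure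
begin

lemma face_family_vertex:
  assumes "vertex w"
  shows "face_family \<tau> {w} \<subseteq> (\<lambda>v. {v}) ` {v. vertex v}"
proof
  fix g assume "g \<in> face_family \<tau> {w}"
  then obtain ks where "g = comp_map \<tau> ks ` {w}" "valid_comp \<tau> {w} ks"
    by (auto simp: face_family_def)
  then show "g \<in> (\<lambda>v. {v}) ` {v. vertex v}" using vertex_comp_map[OF assms] by simp
qed

text \<open>In a perfect structure the family of a vertex has 2^n members, so it contains all vertices.\<close>
lemma perfect_imp_one_vertex_family:
  assumes "perfect \<tau>"
  shows "\<exists>f. proper_face f \<and> (\<forall>v. vertex v \<longrightarrow> {v} \<in> face_family \<tau> f)"
proof -
  define q :: "real^'n" where "q = corner {} {}"
  have q: "vertex q" "proper_face {q}" "codim {q} = CARD('n)"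
    unfolding q_def using vertex_corner vertex_proper_face by blast+
  have "card (face_family \<tau> {q}) = 2 ^ CARD('n)" using assms q unfolding perfect_def by simp
  also have "\<dots> = card ((\<lambda>v. {v}) ` {v :: real^'n. vertex v})"
    using card_vertices[where 'n='n] by (simp add: card_image)
  finally have "face_family \<tau> {q} = (\<lambda>v. {v}) ` {v. vertex v}"
    using card_subset_eq[OF finite_imageI[OF finite_vertices] face_family_vertex[OF q(1)]] by simp
  then show ?thesis using q(2) by blast
qed

text \<open>A face whose family contains a vertex singleton is itself a vertex, the maps being injective.\<close>
lemma family_with_vertex_is_vertex:
  assumes "proper_face f" "{q} \<in> face_family \<tau> f"
  obtains p where "f = {p}" "vertex p"
proof -
  obtain ks where ks: "{q} = comp_map \<tau> ks ` f" "valid_comp \<tau> f ks"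
    using assms(2) by (auto simp: face_family_def)
  have "card f = card {q}" using card_image[OF comp_map_inj_on[OF ks(2)]] ks(1) by simp
  then have "card f = 1" by simp
  then obtain p where "f = {p}" using card_1_singletonE by blast
  then show thesis using that assms(1) proper_singleton_vertex by blast
qed

lemma one_vertex_family_imp_perfect:
  assumes "strong \<omega> \<tau>" "proper_face f" "\<And>v. vertex v \<Longrightarrow> {v} \<in> face_family \<tau> f"
  shows "perfect \<tau>"
proof -
  obtain v0 where v0: "f = {v0}" "vertex v0"
    using family_with_vertex_is_vertex[OF assms(2) assms(3)[OF vertex_corner]] by blast
  interpret vertex_transitive \<omega> \<tau> v0
    by unfold_locales (use assms v0 in auto)
  show ?thesis unfolding perfect_def using card_face_family by blast
qed

end

theorem mainTheorem7:
  fixes \<omega> :: "'n::finite sidx \<Rightarrow> 'n sidx"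
    and \<tau> :: "'n sidx \<Rightarrow> real^'n \<Rightarrow> real^'n"
  assumes "regular_fps \<omega> \<tau>" and "strong \<omega> \<tau>"
  shows "perfect \<tau> \<longleftrightarrow>
    (\<exists>f. proper_face f \<and> (\<forall>v. vertex v \<longrightarrow> {v} \<in> face_family \<tau> f))"
proof -
  interpret pairing_structure \<omega> \<tau>
    using assms(1) by (simp add: pairing_structure_def regular_fps_def)
  show ?thesis
    using perfect_imp_one_vertex_family one_vertex_family_imp_perfect[OF assms(2)] by blast
qed

end
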